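(* The metric $g$ is Killing (i.e. $\mathrm{Ad}$-invariant: $g([x,y],z)=g(x,[y,z])$ for all $x,y,z\in\mathfrak l$) if and only if $(L,\varphi,\xi,\eta,g)$ belongs to $\mathcal{F}_8\oplus\mathcal{F}_{10}$ with $2\lambda=-\nu$, where $\lambda=F_{101}$ and $\nu=F_{011}$. Equivalently, $g$ is Killing iff $C_{12}^0=-C_{01}^2=-C_{02}^1$ and all other $C_{ij}^k$ ($i<j$) vanish.
   Context: Let $L$ be a 3-dimensional real connected Lie group with Lie algebra $\mathfrak l$, and let $\{E_0,E_1,E_2\}$ be a basis of left-invariant vector fields, with $[E_i,E_j]=C_{ij}^kE_k$. Define the left-invariant almost contact structure $(\varphi,\xi,\eta)$ by $\varphi E_0=0$, $\varphi E_1=E_2$, $\varphi E_2=-E_1$, $\xi=E_0$, $\eta(E_0)=1$, $\eta(E_1)=\eta(E_2)=0$, and the left-invariant pseudo-Riemannian metric $g$ by $g(E_0,E_0)=g(E_1,E_1)=-g(E_2,E_2)=1$, $g(E_i,E_j)=0$ for $i\neq j$. Let $\nabla$ be the Levi-Civita connection of $g$, $F(x,y,z)=g((\nabla_x\varphi)y,z)$, and $F_{ijk}=F(E_i,E_j,E_k)$. The manifold belongs to $\mathcal{F}_8$ iff all $F_{ijk}$ vanish except possibly $F_{101}=F_{110}=F_{202}=F_{220}=:\lambda$; to $\mathcal{F}_{10}$ iff all vanish except possibly $F_{011}=F_{022}=:\nu$; it belongs to $\mathcal{F}_8\oplus\mathcal{F}_{10}$ iff $F$ is the sum of a tensor of the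 $\mathcal{F}_8$ form and a tensor of the $\mathcal{F}_{10}$ form, i.e. all $F_{ijk}$ vanish except possibly $F_{101}=F_{110}=F_{202}=F_{220}=\lambda$ and $F_{011}=F_{022}=\nu$. *)

theory Defs
  imports Complex_Main
begin

(* The Lie algebra l of L is identified with R^3 via the basis E_0,E_1,E_2:
   a vector is a function nat => real whose components 0,1,2 are used.
   C i j k = C_{ij}^k are the structure constants, [E_i,E_j] = sum_k C i j k E_k.
   Nb i j k = k-th component of nabla_{E_i} E_j (Levi-Civita connection on
   left-invariant fields). *)

definition basis_vec :: "nat \<Rightarrow> nat \<Rightarrow> real" where
  "basis_vec j = (\<lambda>k. if k = j then 1 else 0)"

definition sgn_g :: "nat \<Rightarrow> real" where
  "sgn_g k = (if k = 2 then -1 else 1)"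

definition gmet :: "(nat \<Rightarrow> real) \<Rightarrow> (nat \<Rightarrow> real) \<Rightarrow> real" where
  "gmet x y = x 0 * y 0 + x 1 * y 1 - x 2 * y 2"

definition lie_br :: "(nat \<Rightarrow> nat \<Rightarrow> nat \<Rightarrow> real) \<Rightarrow> (nat \<Rightarrow> real) \<Rightarrow> (nat \<Rightarrow> real) \<Rightarrow> (nat \<Rightarrow> real)" where
  "lie_br C x y = (\<lambda>k. \<Sum>i<3. \<Sum>j<3. x i * y j * C i j k)"

definition is_lie_structure :: "(nat \<Rightarrow> nat \<Rightarrow> nat \<Rightarrow> real) \<Rightarrow> bool" where
  "is_lie_structure C \<longleftrightarrow>
     (\<forall>i<3. \<forall>j<3. \<forall>k<3. C i j k = - C j i k) \<and>
     (\<forall>i<3. \<forall>j<3. \<forall>l<3. \<forall>m<3.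
        (\<Sum>k<3. C i j k * C k l m + C j l k * C k i m + C l i k * C k j m) = 0)"

definition phi :: "(nat \<Rightarrow> real) \<Rightarrow> (nat \<Rightarrow> real)" where
  "phi v = (\<lambda>k. if k = 1 then - v 2 else if k = 2 then v 1 else 0)"

definition nabla_vec :: "(nat \<Rightarrow> nat \<Rightarrow> nat \<Rightarrow> real) \<Rightarrow> nat \<Rightarrow> (nat \<Rightarrow> real) \<Rightarrow> (nat \<Rightarrow> real)" where
  "nabla_vec Nb i v = (\<lambda>k. \<Sum>j<3. v j * Nb i j k)"

(* Levi-Civita connection on left-invariant vector fields: torsion free and
   metric (for left-invariant fields g(Y,Z) is constant, so X g(Y,Z) = 0). *)
definition is_levi_civita ::
  "(nat \<Rightarrow> nat \<Rightarrow> nat \<Rightarrow> real) \<Rightarrow> (nat \<Rightarrow> nat \<Rightarrow> nat \<Rightarrow> real) \<Rightarrow> bool" where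
  "is_levi_civita C Nb \<longleftrightarrow>
     (\<forall>i<3. \<forall>j<3. \<forall>k<3. Nb i j k - Nb j i k = C i j k) \<and>
     (\<forall>i<3. \<forall>j<3. \<forall>k<3.
        gmet (nabla_vec Nb i (basis_vec j)) (basis_vec k)
        + gmet (basis_vec j) (nabla_vec Nb i (basis_vec k)) = 0)"

definition Fcomp :: "(nat \<Rightarrow> nat \<Rightarrow> nat \<Rightarrow> real) \<Rightarrow> nat \<Rightarrow> nat \<Rightarrow> nat \<Rightarrow> real" where
  "Fcomp Nb i j k =
     gmet (\<lambda>m. nabla_vec Nb i (phi (basis_vec j)) m - phi (nabla_vec Nb i (basis_vec j)) m)
          (basis_vec k)"

definition killing_metric :: "(nat \<Rightarrow> nat \<Rightarrow> nat \<Rightarrow> real) \<Rightarrow> bool" where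
  "killing_metric C \<longleftrightarrow>
     (\<forall>x y z. gmet (lie_br C x y) z = gmet x (lie_br C y z))"

definition F8_F10_form :: "(nat \<Rightarrow> nat \<Rightarrow> nat \<Rightarrow> real) \<Rightarrow> real \<Rightarrow> real \<Rightarrow> bool" where
  "F8_F10_form Nb lam nu \<longleftrightarrow>
     (\<forall>i<3. \<forall>j<3. \<forall>k<3. Fcomp Nb i j k =
        (if (i,j,k) \<in> {(1,0,1),(1,1,0),(2,0,2),(2,2,0)} then lam
         else if (i,j,k) \<in> {(0,1,1),(0,2,2)} then nu else 0))"

end

theory Submission
  imports Defs
begin

(* Everything is expressed in the orthonormal frame E_0, E_1, E_2 of signature
   (+,+,-), so both sides of the theorem become conditions on the structure
   constants C_{ij}^k.
   1. Ad-invariance of g is trilinear in its three arguments, hence equivalent to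
      the cyclic identity C_{ij}^k g_kk = C_{jk}^i g_ii on basis vectors.
   2. The Koszul formula expresses the Levi-Civita connection Nb through C.
      Substituting it, the 27 components F_{ijk} become explicit linear
      expressions in the nine independent structure constants (Fcomp_table).
   3. Using antisymmetry of C, both the cyclic identity and the condition
      "F lies in F_8 (+) F_10 with 2 lambda = - nu" are seen to be equivalent to
      one explicit shape of C (killing_shape): C_{12}^0 = -C_{01}^2 = -C_{02}^1,
      all other C_{ij}^k (i < j) zero. *)

lemma less_3_eq: "{..<3::nat} = {0, 1, 2}"
  by auto

lemma all_less_3: "(\<forall>i<(3::nat). P i) \<longleftrightarrow> P 0 \<and> P 1 \<and> P 2"
  using less_3_eq by (metis insert_iff lessThan_iff singletonD)

lemma sum_less_3: "(\<Sum>i<(3::nat). f i) = f 0 + f 1 + f 2"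
  by (simp add: less_3_eq add.assoc)

lemma less_3_cases: "(i::nat) < 3 \<Longrightarrow> i = 0 \<or> i = 1 \<or> i = 2"
  by auto

lemma sgn_g_square: "sgn_g k * sgn_g k = 1"
  by (simp add: sgn_g_def)

lemma gmet_sum: "gmet u v = (\<Sum>k<3. u k * v k * sgn_g k)"
  by (simp add: gmet_def sum_less_3 sgn_g_def)

lemma gmet_basis_right: "k < 3 \<Longrightarrow> gmet v (basis_vec k) = v k * sgn_g k"
  by (drule less_3_cases) (auto simp: gmet_def basis_vec_def sgn_g_def)

lemma gmet_basis_left: "k < 3 \<Longrightarrow> gmet (basis_vec k) v = v k * sgn_g k"
  by (drule less_3_cases) (auto simp: gmet_def basis_vec_def sgn_g_def)

lemma nabla_basis: "j < 3 \<Longrightarrow> nabla_vec Nb i (basis_vec j) = (\<lambda>k. Nb i j k)"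
  by (drule less_3_cases) (auto simp: nabla_vec_def basis_vec_def sum_less_3)

lemma lie_br_basis:
  "i < 3 \<Longrightarrow> j < 3 \<Longrightarrow> lie_br C (basis_vec i) (basis_vec j) = (\<lambda>k. C i j k)"
  by (drule less_3_cases, drule less_3_cases) (auto simp: lie_br_def basis_vec_def sum_less_3)

(* Ad-invariance of g is a trilinear identity, so it suffices to check it on the
   frame, where it reads C_{ij}^k g_kk = C_{jk}^i g_ii. *)
lemma killing_iff_cyclic:
  "killing_metric C \<longleftrightarrow>
     (\<forall>i<3. \<forall>j<3. \<forall>k<3. C i j k * sgn_g k = C j k i * sgn_g i)"
proof
  assume killing: "killing_metric C"
  show "\<forall>i<3. \<forall>j<3. \<forall>k<3. C i j k * sgn_g k = C j k i * sgn_g i"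
  proof (intro allI impI)
    fix i j k :: nat assume "i < 3" "j < 3" "k < 3"
    moreover have "gmet (lie_br C (basis_vec i) (basis_vec j)) (basis_vec k)
        = gmet (basis_vec i) (lie_br C (basis_vec j) (basis_vec k))"
      using killing unfolding killing_metric_def by blast
    ultimately show "C i j k * sgn_g k = C j k i * sgn_g i"
      by (simp add: lie_br_basis gmet_basis_left gmet_basis_right)
  qed
next
  assume cyclic: "\<forall>i<3. \<forall>j<3. \<forall>k<3. C i j k * sgn_g k = C j k i * sgn_g i"
  show "killing_metric C"
    unfolding killing_metric_def
  proof (intro allI)
    fix x y z :: "nat \<Rightarrow> real"
    have "gmet (lie_br C x y) z
        = (\<Sum>i<3. \<Sum>j<3. \<Sum>k<3. x i * y j * z k * (C i j k * sgn_g k))"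
      by (simp add: gmet_sum lie_br_def sum_less_3 algebra_simps)
    also have "\<dots> = (\<Sum>i<3. \<Sum>j<3. \<Sum>k<3. x i * y j * z k * (C j k i * sgn_g i))"
      using cyclic by (intro sum.cong refl) auto
    also have "\<dots> = gmet x (lie_br C y z)"
      by (simp add: gmet_sum lie_br_def sum_less_3 algebra_simps)
    finally show "gmet (lie_br C x y) z = gmet x (lie_br C y z)" .
  qed
qed

(* Lowering the last index (N = Nb g,
   c = C g), metricity makes N skew in its last two indices and torsion-freeness
   gives N_ijk - N_jik = c_ijk; the usual cyclic combination solves for N. *)
lemma levi_civita_koszul:
  assumes "is_levi_civita C Nb" "i < 3" "j < 3" "k < 3"
  shows "Nb i j k = (C i j k * sgn_g k - C j k i * sgn_g i + C k i j * sgn_g j) * sgn_g k / 2"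
proof -
  define N where "N i j k = Nb i j k * sgn_g k" for i j k
  define c where "c i j k = C i j k * sgn_g k" for i j k
  have metric: "N i j k + N i k j = 0" if "i < 3" "j < 3" "k < 3" for i j k
    using assms(1) that
    by (simp add: is_levi_civita_def N_def gmet_basis_left gmet_basis_right nabla_basis)
  have torsion_free: "N i j k - N j i k = c i j k" if "i < 3" "j < 3" "k < 3" for i j k
    using assms(1) that
    by (simp add: is_levi_civita_def N_def c_def left_diff_distrib[symmetric])
  have "2 * N i j k = c i j k - c j k i + c k i j"
    using metric[of i j k] metric[of j i k] metric[of k j i]
      torsion_free[of i j k] torsion_free[of j k i] torsion_free[of k i j] assms(2-4)
    by linarith
  then have "2 * Nb i j k * (sgn_g k * sgn_g k) = (c i j k - c j k i + c k i j) * sgn_g k"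
    by (simp add: N_def mult.assoc)
  then show ?thesis
    by (simp add: sgn_g_square c_def)
qed

(* Antisymmetry C_{ij}^k = -C_{ji}^k: the only part of the Lie algebra axioms the
   argument uses. *)
definition antisymmetric :: "(nat \<Rightarrow> nat \<Rightarrow> nat \<Rightarrow> real) \<Rightarrow> bool" where
  "antisymmetric C \<longleftrightarrow> (\<forall>i<3. \<forall>j<3. \<forall>k<3. C i j k = - C j i k)"

lemma lie_structure_antisymmetric: "is_lie_structure C \<Longrightarrow> antisymmetric C"
  unfolding is_lie_structure_def antisymmetric_def by (rule conjunct1)

lemma antisymmetric_reduce:
  assumes "antisymmetric C" "j < 3" "k < 3"
  shows "C j j k = 0" and "i < j \<Longrightarrow> C j i k = - C i j k"
proof -
  have swap: "C i j k = - C j i k" if "i < 3" for i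
    using assms that unfolding antisymmetric_def by blast
  show "C j j k = 0"
    using swap[of j] assms(2) by simp
  show "i < j \<Longrightarrow> C j i k = - C i j k"
    using swap[of i] assms(2) by simp
qed

(* The common normal form of both conditions of the theorem: among the C_{ij}^k
   with i < j only C_{01}^2, C_{02}^1, C_{12}^0 survive, tied by
   C_{12}^0 = -C_{01}^2 = -C_{02}^1. *)
definition killing_shape :: "(nat \<Rightarrow> nat \<Rightarrow> nat \<Rightarrow> real) \<Rightarrow> bool" where
  "killing_shape C \<longleftrightarrow>
     C 1 2 0 = - C 0 1 2 \<and> C 1 2 0 = - C 0 2 1 \<and>
     C 0 1 0 = 0 \<and> C 0 1 1 = 0 \<and> C 0 2 0 = 0 \<and> C 0 2 2 = 0 \<and> C 1 2 1 = 0 \<and> C 1 2 2 = 0"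

lemma killing_shape_iff:
  "killing_shape C \<longleftrightarrow>
     C 1 2 0 = - C 0 1 2 \<and> C 1 2 0 = - C 0 2 1 \<and>
     (\<forall>i j k. i < j \<and> j < 3 \<and> k < 3 \<and>
        (i,j,k) \<notin> {(1,2,0),(0,1,2),(0,2,1)} \<longrightarrow> C i j k = 0)"
proof -
  have "(\<forall>i j k. i < j \<and> j < 3 \<and> k < 3 \<and>
          (i,j,k) \<notin> {(1,2,0),(0,1,2),(0,2,1)} \<longrightarrow> C i j k = 0) \<longleftrightarrow>
        C 0 1 0 = 0 \<and> C 0 1 1 = 0 \<and> C 0 2 0 = 0 \<and> C 0 2 2 = 0 \<and> C 1 2 1 = 0 \<and> C 1 2 2 = 0"
    (is "?vanish \<longleftrightarrow> ?six")
  proof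
    assume ?vanish
    then show ?six by simp
  next
    assume ?six
    show ?vanish
    proof (intro allI impI)
      fix i j k :: nat
      assume "i < j \<and> j < 3 \<and> k < 3 \<and> (i,j,k) \<notin> {(1,2,0),(0,1,2),(0,2,1)}"
      then have "(i = 0 \<and> j = 1 \<or> i = 0 \<and> j = 2 \<or> i = 1 \<and> j = 2) \<and> (k = 0 \<or> k = 1 \<or> k = 2)"
        and "(i,j,k) \<notin> {(1,2,0),(0,1,2),(0,2,1)}"
        by auto
      then show "C i j k = 0"
        using \<open>?six\<close> by (elim conjE disjE) auto
    qed
  qed
  then show ?thesis
    unfolding killing_shape_def by blast
qed

lemma cyclic_iff_killing_shape:
  assumes "antisymmetric C"
  shows "(\<forall>i<3. \<forall>j<3. \<forall>k<3. C i j k * sgn_g k = C j k i * sgn_g i) \<longleftrightarrow> killing_shape C"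
proof
  assume cyclic: "\<forall>i<3. \<forall>j<3. \<forall>k<3. C i j k * sgn_g k = C j k i * sgn_g i"
  have "C i j k * sgn_g k = C j k i * sgn_g i" if "i < 3" "j < 3" "k < 3" for i j k
    using cyclic that by blast
  from this[of 0 1 0] this[of 0 1 1] this[of 0 2 0] this[of 0 2 2] this[of 1 2 1]
    this[of 1 2 2] this[of 1 2 0] this[of 0 1 2] this[of 2 0 1] this[of 1 0 2]
  show "killing_shape C"
    by (simp add: killing_shape_def antisymmetric_reduce[OF assms] sgn_g_def)
next
  assume "killing_shape C"
  then show "\<forall>i<3. \<forall>j<3. \<forall>k<3. C i j k * sgn_g k = C j k i * sgn_g i"
    unfolding all_less_3 killing_shape_def
    by (simp add: antisymmetric_reduce[OF assms] sgn_g_def)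
qed

lemma Fcomp_table:
  assumes "antisymmetric C" "is_levi_civita C Nb"
  shows "Fcomp Nb 0 0 0 = 0"
      "Fcomp Nb 0 0 1 = C 0 2 0"
      "Fcomp Nb 0 0 2 = - C 0 1 0"
    and "Fcomp Nb 0 1 0 = C 0 2 0"
      "Fcomp Nb 0 1 1 = C 0 1 2 + C 0 2 1 + C 1 2 0"
      "Fcomp Nb 0 1 2 = 0"
    and "Fcomp Nb 0 2 0 = - C 0 1 0"
      "Fcomp Nb 0 2 1 = 0"
      "Fcomp Nb 0 2 2 = C 0 1 2 + C 0 2 1 + C 1 2 0"
    and "Fcomp Nb 1 0 0 = 0"
      "Fcomp Nb 1 0 1 = (- C 0 1 2 + C 0 2 1 + C 1 2 0) / 2"
      "Fcomp Nb 1 0 2 = - C 0 1 1"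
    and "Fcomp Nb 1 1 0 = (- C 0 1 2 + C 0 2 1 + C 1 2 0) / 2"
      "Fcomp Nb 1 1 1 = 2 * C 1 2 1"
      "Fcomp Nb 1 1 2 = 0"
    and "Fcomp Nb 1 2 0 = - C 0 1 1"
      "Fcomp Nb 1 2 1 = 0"
      "Fcomp Nb 1 2 2 = 2 * C 1 2 1"
    and "Fcomp Nb 2 0 0 = 0"
      "Fcomp Nb 2 0 1 = - C 0 2 2"
      "Fcomp Nb 2 0 2 = (C 0 1 2 - C 0 2 1 + C 1 2 0) / 2"
    and "Fcomp Nb 2 1 0 = - C 0 2 2"
      "Fcomp Nb 2 1 1 = - 2 * C 1 2 2"
      "Fcomp Nb 2 1 2 = 0"
    and "Fcomp Nb 2 2 0 = (C 0 1 2 - C 0 2 1 + C 1 2 0) / 2"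
      "Fcomp Nb 2 2 1 = 0"
      "Fcomp Nb 2 2 2 = - 2 * C 1 2 2"
  by (simp_all add: Fcomp_def phi_def gmet_def nabla_vec_def basis_vec_def sum_less_3
      levi_civita_koszul[OF assms(2)] antisymmetric_reduce[OF assms(1)] sgn_g_def field_simps)

lemma F8_F10_iff_killing_shape:
  assumes "antisymmetric C" "is_levi_civita C Nb"
  shows "(\<exists>lam nu. F8_F10_form Nb lam nu \<and> 2 * lam = - nu) \<longleftrightarrow> killing_shape C"
proof
  assume "\<exists>lam nu. F8_F10_form Nb lam nu \<and> 2 * lam = - nu"
  then obtain lam nu where form: "F8_F10_form Nb lam nu" and rel: "2 * lam = - nu"
    by blast
  have "Fcomp Nb i j k = (if (i,j,k) \<in> {(1,0,1),(1,1,0),(2,0,2),(2,2,0)} then lam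
      else if (i,j,k) \<in> {(0,1,1),(0,2,2)} then nu else 0)" if "i < 3" "j < 3" "k < 3" for i j k
    using form that unfolding F8_F10_form_def by blast
  from this[of 0 0 1] this[of 0 0 2] this[of 1 0 2] this[of 1 1 1] this[of 2 0 1]
    this[of 2 1 1] this[of 1 0 1] this[of 2 0 2] this[of 0 1 1]
  show "killing_shape C"
    using rel unfolding Fcomp_table[OF assms] by (simp add: killing_shape_def)
next
  assume "killing_shape C"
  then have "F8_F10_form Nb (C 1 2 0 / 2) (- C 1 2 0)"
    unfolding F8_F10_form_def all_less_3 Fcomp_table[OF assms]
    by (simp add: killing_shape_def)
  then show "\<exists>lam nu. F8_F10_form Nb lam nu \<and> 2 * lam = - nu"
    by fastforce
qed

theorem theorem2p2:
  fixes C Nb :: "nat \<Rightarrow> nat \<Rightarrow> nat \<Rightarrow> real"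
  assumes "is_lie_structure C"
    and "is_levi_civita C Nb"
  shows "(killing_metric C \<longleftrightarrow>
            (\<exists>lam nu. F8_F10_form Nb lam nu \<and> 2 * lam = - nu))
       \<and> (killing_metric C \<longleftrightarrow>
            (C 1 2 0 = - C 0 1 2 \<and> C 1 2 0 = - C 0 2 1 \<and>
             (\<forall>i j k. i < j \<and> j < 3 \<and> k < 3 \<and>
                (i,j,k) \<notin> {(1,2,0),(0,1,2),(0,2,1)} \<longrightarrow> C i j k = 0)))"
proof -
  have antisym: "antisymmetric C"
    using assms(1) by (rule lie_structure_antisymmetric)
  have killing: "killing_metric C \<longleftrightarrow> killing_shape C"
    using killing_iff_cyclic cyclic_iff_killing_shape[OF antisym] by simp
  have classes: "(\<exists>lam nu. F8_F10_form Nb lam nu \<and> 2 * lam = - nu) \<longleftrightarrow> killing_shape C"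
    using antisym assms(2) by (rule F8_F10_iff_killing_shape)
  show ?thesis
    using killing classes killing_shape_iff by simp
qed

end
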